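(* Let $G=(V,E)$ be a finite simple graph of order $n$. For each feasible solution $(x,z)$ of the Fort Number Model $\mathrm{FN}(G)$ there is a collection $\mathcal{F}$ of pairwise disjoint forts of $G$ with $|\mathcal{F}|=\sum_{i=1}^n z_i$.
   Context: $N(u)$ denotes the neighborhood of $u$. A fort of $G$ is a non-empty set $F\subseteq V$ such that no vertex $u\in V\setminus F$ has exactly one neighbor in $F$. The Fort Number Model $\mathrm{FN}(G)$ has binary variables $x_{iv}$ ($i\in\{1,\dots,n\}$, $v\in V$) and $z_i$ ($i\in\{1,\dots,n\}$), with constraints: $z_i-\sum_{u\in V}x_{iu}\leq0$ for all $i$; $x_{iu}-x_{iv}+\sum_{w\in N(u)\setminus\{v\}}x_{iw}\geq0$ for all $i$, all $v\in V$ and all $u\in N(v)$; $\sum_{i=1}^n x_{iu}\leq1$ for all $u\in V$. Its objective is to maximize $\sum_{i=1}^n z_i$. A feasible solution is one satisfying all constraints. *)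

theory Defs
  imports Main
begin

definition simple_graph :: "'a set \<Rightarrow> ('a \<Rightarrow> 'a \<Rightarrow> bool) \<Rightarrow> bool" where
  "simple_graph V E \<longleftrightarrow> finite V \<and> (\<forall>u v. E u v \<longrightarrow> u \<in> V \<and> v \<in> V)
     \<and> (\<forall>u v. E u v \<longrightarrow> E v u) \<and> (\<forall>u. \<not> E u u)"

definition nbhd :: "'a set \<Rightarrow> ('a \<Rightarrow> 'a \<Rightarrow> bool) \<Rightarrow> 'a \<Rightarrow> 'a set" where
  "nbhd V E u = {w \<in> V. E u w}"

definition is_fort :: "'a set \<Rightarrow> ('a \<Rightarrow> 'a \<Rightarrow> bool) \<Rightarrow> 'a set \<Rightarrow> bool" where
  "is_fort V E F \<longleftrightarrow> F \<noteq> {} \<and> F \<subseteq> V \<and>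
     (\<forall>u \<in> V - F. card (nbhd V E u \<inter> F) \<noteq> 1)"

definition FN_feasible :: "'a set \<Rightarrow> ('a \<Rightarrow> 'a \<Rightarrow> bool) \<Rightarrow> (nat \<Rightarrow> 'a \<Rightarrow> int) \<Rightarrow> (nat \<Rightarrow> int) \<Rightarrow> bool" where
  "FN_feasible V E x z \<longleftrightarrow>
     (\<forall>i \<in> {1..card V}. \<forall>v \<in> V. x i v \<in> {0, 1}) \<and>
     (\<forall>i \<in> {1..card V}. z i \<in> {0, 1}) \<and>
     (\<forall>i \<in> {1..card V}. z i - (\<Sum>u\<in>V. x i u) \<le> 0) \<and>
     (\<forall>i \<in> {1..card V}. \<forall>v \<in> V. \<forall>u \<in> nbhd V E v.
        x i u - x i v + (\<Sum>w \<in> nbhd V E u - {v}. x i w) \<ge> 0) \<and>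
     (\<forall>u \<in> V. (\<Sum>i = 1..card V. x i u) \<le> 1)"

end

theory Submission
  imports Defs "HOL-Library.Disjoint_Sets"
begin

text \<open>Row i of a feasible solution with z i = 1 is the indicator of a fort: if a vertex u
  outside the row had exactly one neighbour v inside, the constraint for the pair (v, u) would
  read 0 - 1 + 0 \<ge> 0. Since every vertex lies in at most one row, these forts are pairwise
  disjoint, and there are exactly \<Sum>i z i of them.\<close>

lemma is_fort_one_set:
  fixes y :: "'a \<Rightarrow> int"
  assumes sym: "\<And>u v. E u v \<Longrightarrow> E v u"
    and binary: "\<forall>v\<in>V. y v \<in> {0, 1}"
    and nonzero: "1 \<le> (\<Sum>v\<in>V. y v)"
    and closed: "\<forall>v\<in>V. \<forall>u\<in>nbhd V E v. y u - y v + (\<Sum>w\<in>nbhd V E u - {v}. y w) \<ge> 0"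
  shows "is_fort V E {v\<in>V. y v = 1}"
  unfolding is_fort_def
proof (intro conjI ballI)
  show "{v\<in>V. y v = 1} \<noteq> {}"
  proof
    assume "{v\<in>V. y v = 1} = {}"
    then have "\<forall>v\<in>V. y v = 0" using binary by auto
    then show False using nonzero by simp
  qed
  show "{v\<in>V. y v = 1} \<subseteq> V" by auto
next
  fix u assume u: "u \<in> V - {v\<in>V. y v = 1}"
  show "card (nbhd V E u \<inter> {v\<in>V. y v = 1}) \<noteq> 1"
  proof
    assume "card (nbhd V E u \<inter> {v\<in>V. y v = 1}) = 1"
    then obtain v where v: "nbhd V E u \<inter> {v\<in>V. y v = 1} = {v}"
      by (auto simp: card_Suc_eq)
    then have "v \<in> V" "y v = 1" and "u \<in> nbhd V E v"
      using u sym unfolding nbhd_def by auto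
    moreover have "y u = 0" using u binary by auto
    moreover have "(\<Sum>w\<in>nbhd V E u - {v}. y w) = 0"
    proof (rule sum.neutral, intro ballI)
      fix w assume w: "w \<in> nbhd V E u - {v}"
      then have "w \<in> V" "y w \<noteq> 1" using v unfolding nbhd_def by auto
      then show "y w = 0" using binary by auto
    qed
    ultimately show False using closed by fastforce
  qed
qed

lemma disjoint_family_on_one_sets:
  fixes y :: "'i \<Rightarrow> 'a \<Rightarrow> int"
  assumes "finite K"
    and nonneg: "\<forall>k\<in>K. \<forall>v\<in>V. 0 \<le> y k v"
    and at_most_one: "\<forall>v\<in>V. (\<Sum>k\<in>K. y k v) \<le> 1"
  shows "disjoint_family_on (\<lambda>k. {v\<in>V. y k v = 1}) K"
  unfolding disjoint_family_on_def
proof (intro ballI impI)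
  fix i j assume ij: "i \<in> K" "j \<in> K" "i \<noteq> j"
  show "{v\<in>V. y i v = 1} \<inter> {v\<in>V. y j v = 1} = {}"
  proof (rule ccontr)
    assume "{v\<in>V. y i v = 1} \<inter> {v\<in>V. y j v = 1} \<noteq> {}"
    then obtain v where v: "v \<in> V" "y i v = 1" "y j v = 1" by auto
    have "2 = (\<Sum>k\<in>{i, j}. y k v)" using v ij(3) by simp
    also have "\<dots> \<le> (\<Sum>k\<in>K. y k v)"
      using ij nonneg v(1) by (intro sum_mono2 \<open>finite K\<close>) auto
    finally show False using at_most_one v(1) by fastforce
  qed
qed

lemma sum_binary_eq_card:
  fixes z :: "'i \<Rightarrow> int"
  assumes "finite K" and "\<forall>i\<in>K. z i \<in> {0, 1}"
  shows "(\<Sum>i\<in>K. z i) = int (card {i\<in>K. z i = 1})"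
proof -
  have "(\<Sum>i\<in>K. z i) = (\<Sum>i\<in>K. of_bool (z i = 1))"
    using assms(2) by (intro sum.cong) auto
  also have "\<dots> = int (card {i\<in>K. z i = 1})"
    using assms(1) by (simp add: Int_def conj_commute)
  finally show ?thesis .
qed

theorem theorem7p1:
  fixes V :: "'a set" and E :: "'a \<Rightarrow> 'a \<Rightarrow> bool"
    and x :: "nat \<Rightarrow> 'a \<Rightarrow> int" and z :: "nat \<Rightarrow> int"
  assumes "simple_graph V E"
    and "FN_feasible V E x z"
  shows "\<exists>\<F> :: 'a set set. finite \<F> \<and> (\<forall>F \<in> \<F>. is_fort V E F) \<and>
           pairwise disjnt \<F> \<and> int (card \<F>) = (\<Sum>i = 1..card V. z i)"
proof -
  define I where "I = {i\<in>{1..card V}. z i = 1}"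
  define F where "F i = {v\<in>V. x i v = 1}" for i
  have sym: "\<And>u v. E u v \<Longrightarrow> E v u"
    using assms(1) unfolding simple_graph_def by blast
  have forts: "is_fort V E (F i)" if "i \<in> I" for i
    using assms(2) that sym unfolding F_def I_def FN_feasible_def
    by (intro is_fort_one_set) fastforce+
  have "disjoint_family_on F {1..card V}"
    using assms(2) unfolding F_def FN_feasible_def
    by (intro disjoint_family_on_one_sets) fastforce+
  then have "disjoint_family_on F I"
    unfolding I_def by (rule disjoint_family_on_mono[rotated]) auto
  then have "pairwise disjnt (F ` I)" and "inj_on F I"
    using forts disjoint_family_on_iff_disjoint_image[of I F]
    unfolding is_fort_def by auto
  moreover have "(\<Sum>i = 1..card V. z i) = int (card I)"
    using assms(2) unfolding I_def FN_feasible_def by (intro sum_binary_eq_card) auto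
  ultimately show ?thesis
    using forts by (intro exI[of _ "F ` I"]) (auto simp: I_def card_image)
qed

end
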